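(* The semantics $\mathit{cf2}$ and $\mathit{stg2}$ satisfy the weak reinstatement criterion: for every argumentation framework $\mathcal{F}$ and every $S\in\mathit{cf2}(\mathcal{F})$ or $S\in\mathit{stg2}(\mathcal{F})$, $S$ contains the grounded extension of $\mathcal{F}$.
   Context: An argumentation framework (AF) is $\mathcal{F}=(A_{\mathcal{F}},R_{\mathcal{F}})$ with $R_{\mathcal{F}}\subseteq A_{\mathcal{F}}\times A_{\mathcal{F}}$ (possibly infinite); $a\rightarrow b$ means $(a,b)\in R_{\mathcal{F}}$. $S$ defends $a$ if every attacker of $a$ is attacked by some element of $S$; the grounded extension is the least fixed point of $S\mapsto\{x:S\text{ defends }x\}$. $\mathcal{F}|_B=(A_{\mathcal{F}}\cap B,R_{\mathcal{F}}\cap(B\times B))$. Conflict-free: no $a,b\in S$ with $a\rightarrow b$; naive: $\subseteq$-maximal conflict-free; $S^\oplus=S\cup\{x:\exists y\in S,\ y\rightarrow x\}$; stage: conflict-free $S$ with no conflict-free $T$ having $S^\oplus\subsetneq T^\oplus$. $\mathrm{SCC}(\mathcal{F})$: strongly connected components of the attack graph. $D_S(X)=\{b\in X:\exists a\in S\setminus X,\ a\rightarrow b\}$. $S\in\mathit{cf2}(\mathcal{F})$ iff either $|\mathrm{SCC}(\mathcal{F})|=1$ and $S$ is naive in $\mathcal{F}$, or $|\mathrm{SCC}(\mathcal{F})|\ne 1$ and for each $X\in\mathrm{SCC}(\mathcal{F})$, $S\cap X\in\mathit{cf2}(\mathcal{F}|_{X\setminus D_S(X)})$ (recursively). For infinite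 AFs the recursion may be ill-founded; $S$ is counted as a member of $\mathit{cf2}(\mathcal{F})$ only when the tree of recursive calls has no infinite branch and the condition holds at every leaf. $\mathit{stg2}$ is the same with stage in place of naive. *)

theory Defs
  imports Main
begin

type_synonym 'a af = "'a set \<times> ('a \<times> 'a) set"

definition args :: "'a af \<Rightarrow> 'a set" where "args F = fst F"
definition atts :: "'a af \<Rightarrow> ('a \<times> 'a) set" where "atts F = snd F"

definition wf_af :: "'a af \<Rightarrow> bool" where
  "wf_af F \<longleftrightarrow> atts F \<subseteq> args F \<times> args F"

definition defends :: "'a af \<Rightarrow> 'a set \<Rightarrow> 'a \<Rightarrow> bool" where
  "defends F S a \<longleftrightarrow> (\<forall>b. (b, a) \<in> atts F \<longrightarrow> (\<exists>c\<in>S. (c, b) \<in> atts F))"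

definition char_fun :: "'a af \<Rightarrow> 'a set \<Rightarrow> 'a set" where
  "char_fun F S = {x \<in> args F. defends F S x}"

definition grounded :: "'a af \<Rightarrow> 'a set" where
  "grounded F = lfp (char_fun F)"

definition restrict_af :: "'a af \<Rightarrow> 'a set \<Rightarrow> 'a af" where
  "restrict_af F B = (args F \<inter> B, atts F \<inter> (B \<times> B))"

definition conflict_free :: "'a af \<Rightarrow> 'a set \<Rightarrow> bool" where
  "conflict_free F S \<longleftrightarrow> S \<subseteq> args F \<and> (\<forall>a\<in>S. \<forall>b\<in>S. (a, b) \<notin> atts F)"

definition naive :: "'a af \<Rightarrow> 'a set \<Rightarrow> bool" where
  "naive F S \<longleftrightarrow> conflict_free F S \<and> (\<forall>T. conflict_free F T \<and> S \<subseteq> T \<longrightarrow> T = S)"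

definition range_plus :: "'a af \<Rightarrow> 'a set \<Rightarrow> 'a set" where
  "range_plus F S = S \<union> {x. \<exists>y\<in>S. (y, x) \<in> atts F}"

definition stage :: "'a af \<Rightarrow> 'a set \<Rightarrow> bool" where
  "stage F S \<longleftrightarrow> conflict_free F S \<and>
     \<not> (\<exists>T. conflict_free F T \<and> range_plus F S \<subset> range_plus F T)"

definition SCCs :: "'a af \<Rightarrow> 'a set set" where
  "SCCs F = (\<lambda>x. {y \<in> args F. (x, y) \<in> (atts F)\<^sup>* \<and> (y, x) \<in> (atts F)\<^sup>*}) ` args F"

definition D_set :: "'a af \<Rightarrow> 'a set \<Rightarrow> 'a set \<Rightarrow> 'a set" where
  "D_set F S X = {b \<in> X. \<exists>a \<in> S - X. (a, b) \<in> atts F}"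

text \<open>SCC-recursive scheme over a base semantics. Being inductive (least fixed point),
  membership requires a well-founded tree of recursive calls.\<close>
inductive scc_rec :: "('a af \<Rightarrow> 'a set \<Rightarrow> bool) \<Rightarrow> 'a af \<Rightarrow> 'a set \<Rightarrow> bool"
  for base where
  single: "(\<exists>X. SCCs F = {X}) \<Longrightarrow> base F S \<Longrightarrow> scc_rec base F S"
| multi: "\<not> (\<exists>X. SCCs F = {X}) \<Longrightarrow> S \<subseteq> args F \<Longrightarrow>
     (\<forall>X \<in> SCCs F. scc_rec base (restrict_af F (X - D_set F S X)) (S \<inter> X)) \<Longrightarrow>
     scc_rec base F S"

definition cf2 :: "'a af \<Rightarrow> 'a set \<Rightarrow> bool" where "cf2 = scc_rec naive"
definition stg2 :: "'a af \<Rightarrow> 'a set \<Rightarrow> bool" where "stg2 = scc_rec stage"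

end

theory Submission
  imports Defs
begin

text \<open>In the single-SCC case, strong connectivity forces
  every grounded argument to be unattacked: an attacker b of a grounded argument would be
  counter-attacked by an unattacked grounded argument c, yet b reaches c. So the grounded
  extension is empty unless F is a single unattacked argument, which every naive and every
  stage extension contains. In the multi-SCC case, a grounded argument x is defended by grounded
  arguments, which lie in S by induction; as S is conflict-free, x is not in D_S(X) for its
  SCC X, and defenders of x against attackers in X - D_S(X) must themselves lie in X. So x is
  grounded in F restricted to X - D_S(X), hence in S by induction.\<close>

abbreviation scc_reduct :: "'a af \<Rightarrow> 'a set \<Rightarrow> 'a set \<Rightarrow> 'a af" where
  "scc_reduct F S X \<equiv> restrict_af F (X - D_set F S X)"

lemma args_restrict_af [simp]: "args (restrict_af F B) = args F \<inter> B"
  unfolding restrict_af_def args_def by simp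

lemma atts_restrict_af [simp]: "atts (restrict_af F B) = atts F \<inter> (B \<times> B)"
  unfolding restrict_af_def atts_def by simp

lemma wf_af_restrict_af: "wf_af F \<Longrightarrow> wf_af (restrict_af F B)"
  unfolding wf_af_def by auto

definition scc_of :: "'a af \<Rightarrow> 'a \<Rightarrow> 'a set" where
  "scc_of F x = {y \<in> args F. (x, y) \<in> (atts F)\<^sup>* \<and> (y, x) \<in> (atts F)\<^sup>*}"

lemma scc_of_in_SCCs: "x \<in> args F \<Longrightarrow> scc_of F x \<in> SCCs F"
  unfolding SCCs_def scc_of_def by blast

lemma scc_of_self: "x \<in> args F \<Longrightarrow> x \<in> scc_of F x"
  unfolding scc_of_def by auto

lemma scc_of_eq: "y \<in> scc_of F x \<Longrightarrow> scc_of F y = scc_of F x"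
  unfolding scc_of_def by (auto intro: rtrancl_trans)

definition strongly_connected :: "'a af \<Rightarrow> bool" where
  "strongly_connected F \<longleftrightarrow> (\<forall>y\<in>args F. \<forall>z\<in>args F. (y, z) \<in> (atts F)\<^sup>*)"

lemma SCCs_singleton_strongly_connected:
  assumes "SCCs F = {X}"
  shows "strongly_connected F"
  unfolding strongly_connected_def
proof (intro ballI)
  fix y z assume "y \<in> args F" and "z \<in> args F"
  then have "scc_of F y = scc_of F z"
    using scc_of_in_SCCs[of y F] scc_of_in_SCCs[of z F] assms by simp
  then show "(y, z) \<in> (atts F)\<^sup>*"
    using scc_of_self[OF \<open>z \<in> args F\<close>] unfolding scc_of_def by auto
qed

lemma mono_char_fun: "mono (char_fun F)"
  unfolding mono_def char_fun_def defends_def by blast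

lemma grounded_fixpoint: "char_fun F (grounded F) = grounded F"
  unfolding grounded_def using lfp_fixpoint[OF mono_char_fun] .

lemma grounded_subset_args: "grounded F \<subseteq> args F"
  using grounded_fixpoint[of F] unfolding char_fun_def by blast

lemma defended_in_grounded: "x \<in> args F \<Longrightarrow> defends F (grounded F) x \<Longrightarrow> x \<in> grounded F"
  using grounded_fixpoint[of F] unfolding char_fun_def by blast

lemma grounded_induct:
  assumes "\<And>x. x \<in> args F \<Longrightarrow> defends F (grounded F \<inter> P) x \<Longrightarrow> x \<in> P"
  shows "grounded F \<subseteq> P"
  unfolding grounded_def
proof (rule lfp_induct[OF mono_char_fun])
  show "char_fun F (inf (lfp (char_fun F)) P) \<le> P"
  proof
    fix x assume "x \<in> char_fun F (inf (lfp (char_fun F)) P)"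
    then have "x \<in> args F" and "defends F (grounded F \<inter> P) x"
      unfolding char_fun_def grounded_def by auto
    then show "x \<in> P"
      by (rule assms)
  qed
qed

lemma strongly_connected_grounded_unattacked:
  assumes "wf_af F"
    and "strongly_connected F"
  shows "grounded F \<subseteq> {x. \<forall>b. (b, x) \<notin> atts F}"
proof (rule grounded_induct)
  fix x assume defended: "defends F (grounded F \<inter> {x. \<forall>b. (b, x) \<notin> atts F}) x"
  show "x \<in> {x. \<forall>b. (b, x) \<notin> atts F}"
  proof (intro CollectI allI notI)
    fix b assume "(b, x) \<in> atts F"
    then obtain c where c_unattacked: "\<forall>z. (z, c) \<notin> atts F" and cb: "(c, b) \<in> atts F"
      using defended unfolding defends_def by blast
    have "(b, c) \<in> (atts F)\<^sup>*"
      using \<open>strongly_connected F\<close> cb \<open>wf_af F\<close>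
      unfolding strongly_connected_def wf_af_def by blast
    then show False
      by (cases rule: rtranclE) (use c_unattacked cb in blast)+
  qed
qed

lemma strongly_connected_unattacked_singleton:
  assumes "wf_af F" and "x \<in> args F" and unattacked: "\<forall>b. (b, x) \<notin> atts F"
    and "strongly_connected F"
  shows "args F = {x}" and "atts F = {}"
proof -
  have "y = x" if "y \<in> args F" for y
    using \<open>strongly_connected F\<close> that \<open>x \<in> args F\<close> unattacked
    unfolding strongly_connected_def by (metis rtranclE)
  then show "args F = {x}"
    using \<open>x \<in> args F\<close> by blast
  then show "atts F = {}"
    using \<open>wf_af F\<close> unattacked unfolding wf_af_def by auto
qed

lemma scc_rec_conflict_free:
  assumes "scc_rec base F S"
    and base_cf: "\<And>F S. base F S \<Longrightarrow> conflict_free F S"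
  shows "conflict_free F S"
  using assms(1)
proof (induction rule: scc_rec.induct)
  case (single F S)
  then show ?case using base_cf by blast
next
  case (multi F S)
  have "(a, b) \<notin> atts F" if "a \<in> S" and "b \<in> S" for a b
  proof
    assume ab: "(a, b) \<in> atts F"
    define X where "X = scc_of F b"
    have "b \<in> args F" using \<open>b \<in> S\<close> multi(2) by blast
    then have "b \<in> X" and "X \<in> SCCs F"
      unfolding X_def by (simp_all add: scc_of_self scc_of_in_SCCs)
    then have cf: "conflict_free (scc_reduct F S X) (S \<inter> X)"
      using multi(3) by blast
    show False
    proof (cases "a \<in> X")
      case True
      then show ?thesis using cf ab \<open>a \<in> S\<close> \<open>b \<in> S\<close> \<open>b \<in> X\<close>
        unfolding conflict_free_def args_restrict_af atts_restrict_af by blast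
    next
      case False
      then have "b \<in> D_set F S X"
        unfolding D_set_def using \<open>a \<in> S\<close> \<open>b \<in> X\<close> ab by blast
      then show ?thesis using cf \<open>b \<in> S\<close> \<open>b \<in> X\<close> unfolding conflict_free_def by auto
    qed
  qed
  then show ?case using multi(2) unfolding conflict_free_def by blast
qed

lemma grounded_in_own_scc_reduct:
  assumes "conflict_free F S"
    and reduct_grounded: "\<And>X. X \<in> SCCs F \<Longrightarrow> grounded (scc_reduct F S X) \<subseteq> S"
  shows "grounded F \<subseteq> {x. x \<in> grounded (scc_reduct F S (scc_of F x))}"
proof (rule grounded_induct)
  let ?P = "{x. x \<in> grounded (scc_reduct F S (scc_of F x))}"
  fix x assume "x \<in> args F" and defended: "defends F (grounded F \<inter> ?P) x"
  define X where "X = scc_of F x"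
  have "X \<in> SCCs F" and "x \<in> X"
    unfolding X_def using \<open>x \<in> args F\<close> by (simp_all add: scc_of_self scc_of_in_SCCs)
  have defender_in_S: "c \<in> S" if "c \<in> grounded F \<inter> ?P" for c
  proof -
    have "c \<in> args F"
      using that grounded_subset_args[of F] by blast
    then show "c \<in> S"
      using that reduct_grounded[OF scc_of_in_SCCs] by blast
  qed
  have "x \<notin> D_set F S X"
  proof
    assume "x \<in> D_set F S X"
    then obtain a where "a \<in> S" and "(a, x) \<in> atts F" unfolding D_set_def by blast
    then obtain c where "c \<in> grounded F \<inter> ?P" and "(c, a) \<in> atts F"
      using defended unfolding defends_def by blast
    then show False
      using defender_in_S \<open>a \<in> S\<close> \<open>conflict_free F S\<close> unfolding conflict_free_def by blast
  qed
  have "defends (scc_reduct F S X) (grounded (scc_reduct F S X)) x"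
    unfolding defends_def
  proof (intro allI impI)
    fix b assume "(b, x) \<in> atts (scc_reduct F S X)"
    then have "(b, x) \<in> atts F" and b_reduct: "b \<in> X - D_set F S X" by auto
    then obtain c where c: "c \<in> grounded F \<inter> ?P" and "(c, b) \<in> atts F"
      using defended unfolding defends_def by blast
    have "c \<in> X"
      using b_reduct defender_in_S[OF c] \<open>(c, b) \<in> atts F\<close> unfolding D_set_def by blast
    then have "c \<in> grounded (scc_reduct F S X)"
      using c scc_of_eq[of c F x] unfolding X_def by auto
    moreover have "c \<in> X - D_set F S X"
      using calculation grounded_subset_args[of "scc_reduct F S X"] by auto
    ultimately show "\<exists>c\<in>grounded (scc_reduct F S X). (c, b) \<in> atts (scc_reduct F S X)"
      using \<open>(c, b) \<in> atts F\<close> b_reduct by auto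
  qed
  then have "x \<in> grounded (scc_reduct F S X)"
    using \<open>x \<in> args F\<close> \<open>x \<in> X\<close> \<open>x \<notin> D_set F S X\<close> by (auto intro: defended_in_grounded)
  then show "x \<in> ?P" unfolding X_def by simp
qed

lemma scc_rec_grounded_subset:
  assumes "scc_rec base F S" and "wf_af F"
    and base_cf: "\<And>F S. base F S \<Longrightarrow> conflict_free F S"
    and base_singleton: "\<And>F S x. base F S \<Longrightarrow> args F = {x} \<Longrightarrow> atts F = {} \<Longrightarrow> x \<in> S"
  shows "grounded F \<subseteq> S"
  using assms(1,2)
proof (induction rule: scc_rec.induct)
  case (single F S)
  then have "strongly_connected F"
    using SCCs_singleton_strongly_connected by blast
  show ?case
  proof
    fix x assume "x \<in> grounded F"
    then have "x \<in> args F" and "\<forall>b. (b, x) \<notin> atts F"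
      using grounded_subset_args[of F]
        strongly_connected_grounded_unattacked[OF \<open>wf_af F\<close> \<open>strongly_connected F\<close>]
      by blast+
    then show "x \<in> S"
      using base_singleton[OF \<open>base F S\<close>] strongly_connected_unattacked_singleton[OF \<open>wf_af F\<close> _ _ \<open>strongly_connected F\<close>]
      by blast
  qed
next
  case (multi F S)
  have "conflict_free F S"
  proof (rule scc_rec_conflict_free[OF _ base_cf])
    show "scc_rec base F S"
      using multi(1-3) by (blast intro: scc_rec.multi)
  qed
  moreover have reduct_grounded: "grounded (scc_reduct F S X) \<subseteq> S" if "X \<in> SCCs F" for X
    using multi(3) that wf_af_restrict_af[OF multi(4)] by blast
  ultimately have "grounded F \<subseteq> {x. x \<in> grounded (scc_reduct F S (scc_of F x))}"
    by (rule grounded_in_own_scc_reduct)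
  then show ?case
    using grounded_subset_args[of F] reduct_grounded[OF scc_of_in_SCCs] by blast
qed

lemma naive_singleton: "naive F S \<Longrightarrow> args F = {x} \<Longrightarrow> atts F = {} \<Longrightarrow> x \<in> S"
  unfolding naive_def conflict_free_def by (metis empty_iff order_refl singleton_iff)

lemma stage_singleton: "stage F S \<Longrightarrow> args F = {x} \<Longrightarrow> atts F = {} \<Longrightarrow> x \<in> S"
  unfolding stage_def conflict_free_def range_plus_def by (cases "x \<in> S") auto

theorem corollary1:
  fixes F :: "'a af" and S :: "'a set"
  assumes "wf_af F"
    and "cf2 F S \<or> stg2 F S"
  shows "grounded F \<subseteq> S"
  using assms(2) unfolding cf2_def stg2_def
proof
  assume "scc_rec naive F S"
  then show ?thesis
    by (rule scc_rec_grounded_subset[OF _ assms(1) _ naive_singleton]) (simp add: naive_def)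
next
  assume "scc_rec stage F S"
  then show ?thesis
    by (rule scc_rec_grounded_subset[OF _ assms(1) _ stage_singleton]) (simp add: stage_def)
qed

end
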